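(* Under the standing setup below, \[ a_{-n-1} \sim \frac{\pi/4}{\arctan u_1}\, D_n \quad \text{as } n \to +\infty . \] In particular, $a_{-n-1} > 0$ for all sufficiently large $n$.
   Context: Standing setup: $a_0, a_1 \in \mathbb{Z}$ and $u_0 > u_1 > 0$ are rational numbers with $a_0 \arctan u_0 + a_1 \arctan u_1 = \pi/4$. Let $\alpha := \arctan u_0 / \arctan u_1$ (which is $>1$ and irrational), with infinite simple continued fraction expansion $\alpha = [q_0; q_1, q_2, \dots]$, $q_i \in \mathbb{N}$. The integers $a_{-n}$ for $n \geq 1$ are defined recursively by $a_{-n-1} := q_n a_{-n} + a_{-n+1}$ for all $n \in \mathbb{N}_0$. The sequences $N_k, D_k$ ($k \ge -2$) are defined by $N_{-2}=0$, $N_{-1}=1$, $D_{-2}=1$, $D_{-1}=0$, and $N_k = q_k N_{k-1} + N_{k-2}$, $D_k = q_k D_{k-1} + D_{k-2}$ for $k \in \mathbb{N}_0$; thus $N_n/D_n = [q_0; q_1, \dots, q_n]$ in lowest terms for $n \ge 0$. *)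

theory Defs
  imports Complex_Main "HOL-Library.Landau_Symbols"
begin

fun cf_rem :: "real \<Rightarrow> nat \<Rightarrow> real" where
  "cf_rem x 0 = x"
| "cf_rem x (Suc n) = 1 / frac (cf_rem x n)"

definition cf_q :: "real \<Rightarrow> nat \<Rightarrow> int" where
  "cf_q x n = \<lfloor>cf_rem x n\<rfloor>"

text \<open>Shifted denominators: cf_Dsh x k = D_{k-2}, i.e. D_{-2}=1, D_{-1}=0,
  D_k = q_k D_{k-1} + D_{k-2}.\<close>
fun cf_Dsh :: "real \<Rightarrow> nat \<Rightarrow> int" where
  "cf_Dsh x 0 = 1"
| "cf_Dsh x (Suc 0) = 0"
| "cf_Dsh x (Suc (Suc n)) = cf_q x n * cf_Dsh x (Suc n) + cf_Dsh x n"

text \<open>Shifted coefficients: coef_sh x a0 a1 k = a_{1-k}, i.e. coef_sh 0 = a_1,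
  coef_sh 1 = a_0, and a_{-n-1} = q_n a_{-n} + a_{-n+1}.\<close>
fun coef_sh :: "real \<Rightarrow> int \<Rightarrow> int \<Rightarrow> nat \<Rightarrow> int" where
  "coef_sh x a0 a1 0 = a1"
| "coef_sh x a0 a1 (Suc 0) = a0"
| "coef_sh x a0 a1 (Suc (Suc n)) = cf_q x n * coef_sh x a0 a1 (Suc n) + coef_sh x a0 a1 n"

end

(*
  The quotient \<alpha> is irrational: otherwise arctan u1 would be a rational multiple of pi, and a
  Niven-type argument (if x / pi and 2 cos x are rational, then 2 cos x is an integer, as the
  scaled Chebyshev recurrence for 2 cos (k x) shows) leaves u = 1 as the only positive rational
  with arctan u / pi rational; the same applies to u0, contradicting u0 > u1.

  The coefficients a_{-n-1} and the denominators D_n satisfy the same recurrence driven by the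
  partial quotients of \<alpha>, hence so does e = a - K D with K = (pi / 4) / arctan u1. Paired with
  the remainders psi_k of the Euclidean algorithm on (arctan u0, arctan u1), every solution f has
  a constant cross sum f_{k+1} psi_k + f_k psi_{k+1}; for e it is a0 arctan u0 + a1 arctan u1 - pi / 4
  = 0. So |e_k| / psi_k is constant and e stays bounded, while D_n >= n.
*)
theory Submission
  imports Defs
begin

lemma rat_square_ne_3: "(u::rat)^2 \<noteq> 3"
proof
  assume "u^2 = 3"
  obtain a b where "b > 0" "coprime a b" "u = of_int a / of_int b"
    by (rule Rats_cases'[of u]) (simp add: Rats_def)
  then have "rat_of_int a = u * of_int b"
    by simp
  then have "rat_of_int (a^2) = rat_of_int (3 * b^2)"
    using \<open>u^2 = 3\<close> by (simp add: power_mult_distrib)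
  then have sq: "a^2 = 3 * b^2"
    by (simp only: of_int_eq_iff)
  show False
  proof (cases "even b")
    case True
    then have "even a" using sq by (metis even_mult_iff even_power zero_less_numeral)
    with True \<open>coprime a b\<close> show False by fastforce
  next
    case False
    then have "odd a" using sq by (metis even_mult_iff even_power odd_numeral zero_less_numeral)
    then obtain k where "a = 2*k + 1" by (meson oddE)
    moreover obtain m where "b = 2*m + 1" using False by (meson oddE)
    ultimately have "4*(k^2 + k) + 1 = 4*(3*(m^2 + m)) + 3"
      using sq by (simp add: algebra_simps power2_eq_square)
    then show False by presburger
  qed
qed

fun cheb_scaled :: "int \<Rightarrow> int \<Rightarrow> nat \<Rightarrow> int" where
  "cheb_scaled p q 0 = 2"
| "cheb_scaled p q (Suc 0) = p"
| "cheb_scaled p q (Suc (Suc k)) = p * cheb_scaled p q (Suc k) - q^2 * cheb_scaled p q k"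

lemma cos_Suc_Suc_mult:
  "cos (real (Suc (Suc k)) * x) = 2 * cos x * cos (real (Suc k) * x) - cos (real k * x)"
proof -
  have "real (Suc (Suc k)) * x = real (Suc k) * x + x" "real k * x = real (Suc k) * x - x"
    by (simp_all add: algebra_simps)
  then show ?thesis
    by (simp only: cos_add cos_diff) simp
qed

lemma of_int_cheb_scaled:
  assumes "2 * cos x = of_int p / of_int q" and "q \<noteq> 0"
  shows "of_int (cheb_scaled p q k) = of_int q ^ k * (2 * cos (real k * x))"
proof (induction k rule: induct_nat_012)
  case 0
  then show ?case by simp
next
  case 1
  then show ?case using assms by simp
next
  case (ge2 k)
  have p: "of_int p = of_int q * (2 * cos x)"
    using assms by (simp add: field_simps)
  have "of_int (cheb_scaled p q (Suc (Suc k)))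
          = of_int p * of_int (cheb_scaled p q (Suc k)) - of_int q ^ 2 * of_int (cheb_scaled p q k)"
    by simp
  also have "\<dots> = of_int q ^ Suc (Suc k)
                  * (2 * (2 * cos x * cos (real (Suc k) * x) - cos (real k * x)))"
    by (simp only: ge2 p) (simp add: algebra_simps power2_eq_square)
  finally show ?case
    by (simp only: cos_Suc_Suc_mult)
qed

lemma dvd_cheb_scaled_minus_power: "q dvd cheb_scaled p q (Suc k) - p ^ Suc k"
proof (induction k)
  case 0
  then show ?case by simp
next
  case (Suc k)
  have "cheb_scaled p q (Suc (Suc k)) - p ^ Suc (Suc k)
          = p * (cheb_scaled p q (Suc k) - p ^ Suc k) - q^2 * cheb_scaled p q k"
    by (simp add: algebra_simps)
  also have "q dvd \<dots>"
    using Suc.IH by (simp add: power2_eq_square)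
  finally show ?case .
qed

lemma two_cos_rational_multiple_pi:
  assumes "x / pi \<in> \<rat>" and "2 * cos x \<in> \<rat>"
  shows "2 * cos x \<in> \<int>"
proof -
  obtain p q where "q > 0" "coprime p q" and pq: "2 * cos x = of_int p / of_int q"
    using Rats_cases'[OF assms(2)] by blast
  obtain m n where "n > 0" and mn: "x / pi = of_int m / of_int n"
    using Rats_cases'[OF assms(1)] by blast
  define N where "N = nat (2 * n)"
  have "N > 0" using \<open>n > 0\<close> by (simp add: N_def)
  have "real N * x = (2 * pi) * of_int m"
    using mn \<open>n > 0\<close> by (simp add: N_def field_simps)
  then have "cos (real N * x) = 1" by simp
  then have "real_of_int (cheb_scaled p q N) = of_int (2 * q ^ N)"
    using of_int_cheb_scaled[OF pq, of N] \<open>q > 0\<close> by simp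
  then have "cheb_scaled p q N = 2 * q ^ N"
    by (simp only: of_int_eq_iff)
  then have "q dvd cheb_scaled p q N"
    using \<open>N > 0\<close> by simp
  moreover have "q dvd cheb_scaled p q N - p ^ N"
    using dvd_cheb_scaled_minus_power[of q p "N - 1"] \<open>N > 0\<close> by simp
  ultimately have "q dvd cheb_scaled p q N - (cheb_scaled p q N - p ^ N)"
    by (rule dvd_diff)
  then have "q dvd p ^ N"
    by simp
  moreover have "coprime (p ^ N) q"
    using \<open>coprime p q\<close> by simp
  ultimately have "is_unit q"
    by (meson coprime_common_divisor dvd_refl)
  then have "q = 1"
    using \<open>q > 0\<close> by simp
  then show ?thesis using pq by simp
qed

lemma arctan_rat_rational_multiple_pi:
  fixes u :: rat
  assumes "u > 0" and "arctan (of_rat u) / pi \<in> \<rat>"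
  shows "u = 1"
proof -
  define t where "t = arctan (of_rat u)"
  define c where "c = 2 * (1 - u^2) / (1 + u^2)"
  have "2 * cos (2 * t) = of_rat c"
    using cos_tan_half[of t]
    by (simp add: t_def c_def tan_arctan of_rat_divide of_rat_diff of_rat_add of_rat_mult of_rat_power)
  moreover have "2 * (t / pi) \<in> \<rat>"
    by (rule Rats_mult) (use assms(2) in \<open>simp_all add: t_def\<close>)
  then have "(2 * t) / pi \<in> \<rat>"
    by (simp only: times_divide_eq_right)
  ultimately have "of_rat c \<in> (\<int> :: real set)"
    using two_cos_rational_multiple_pi[of "2 * t"] by simp
  then obtain i where i: "c = of_int i"
    by (metis Ints_cases of_rat_eq_iff of_rat_of_int_eq)
  have "1 + u^2 > 0" by (simp add: add_pos_nonneg)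
  then have ui: "(2 + of_int i) * u^2 = 2 - of_int i"
    using i by (simp add: c_def field_simps)
  moreover have "-2 < c" "c < 2"
    using \<open>1 + u^2 > 0\<close> \<open>u > 0\<close> by (simp_all add: c_def field_simps)
  then have "i = -1 \<or> i = 0 \<or> i = 1"
    using i by auto
  moreover have "(1 / u)^2 \<noteq> 3" "u^2 \<noteq> 3"
    by (rule rat_square_ne_3)+
  ultimately have "u^2 = 1"
    using \<open>u > 0\<close> by (auto simp: field_simps)
  then show "u = 1"
    using \<open>u > 0\<close> by (simp add: power2_eq_1_iff)
qed

lemma cf_rem_irrational: "x \<notin> \<rat> \<Longrightarrow> cf_rem x k \<notin> \<rat>"
proof (induction k)
  case 0
  then show ?case by simp
next
  case (Suc k)
  have "cf_rem x k = of_int \<lfloor>cf_rem x k\<rfloor> + 1 / cf_rem x (Suc k)"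
    by (simp add: frac_def)
  with Suc show ?case
    by (metis Rats_add Rats_divide Rats_1 Rats_of_int)
qed

lemma cf_rem_Suc_gt_1:
  assumes "x \<notin> \<rat>"
  shows "1 < cf_rem x (Suc k)"
proof -
  have "frac (cf_rem x k) \<noteq> 0"
    using cf_rem_irrational[OF assms] Ints_subset_Rats by auto
  then have "0 < frac (cf_rem x k)"
    using frac_ge_0 by (auto simp: order_le_less)
  then show ?thesis
    using frac_lt_1 by simp
qed

lemma cf_q_Suc_pos:
  assumes "x \<notin> \<rat>"
  shows "1 \<le> cf_q x (Suc k)"
  using cf_rem_Suc_gt_1[OF assms, of k] unfolding cf_q_def by linarith

lemma cf_Dsh_ge:
  assumes "x \<notin> \<rat>"
  shows "int k \<le> cf_Dsh x (k + 2)"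
proof -
  have bounds: "1 \<le> cf_Dsh x (Suc (Suc k)) \<and> int k + 1 \<le> cf_Dsh x (Suc (Suc (Suc k)))" for k
  proof (induction k)
    case 0
    then show ?case using cf_q_Suc_pos[OF assms, of 0] by simp
  next
    case (Suc k)
    have "1 * cf_Dsh x (Suc (Suc (Suc k))) \<le> cf_q x (Suc (Suc k)) * cf_Dsh x (Suc (Suc (Suc k)))"
      using cf_q_Suc_pos[OF assms, of "Suc k"] Suc.IH by (intro mult_right_mono) linarith+
    then show ?case
      using Suc.IH cf_Dsh.simps(3)[of x "Suc (Suc k)"] by linarith
  qed
  show ?thesis
  proof (cases k)
    case 0
    then show ?thesis using bounds[of 0] by simp
  next
    case (Suc j)
    then show ?thesis using bounds[of j] by (simp only: of_nat_Suc add_2_eq_Suc' add.commute)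
  qed
qed

lemma filterlim_cf_Dsh_at_top:
  assumes "x \<notin> \<rat>"
  shows "filterlim (\<lambda>n. real_of_int (cf_Dsh x (n + 2))) at_top at_top"
proof (rule filterlim_at_top_mono[OF filterlim_real_sequentially])
  have "real n \<le> real_of_int (cf_Dsh x (n + 2))" for n
    using cf_Dsh_ge[OF assms, of n] by (metis of_int_le_iff of_int_of_nat_eq)
  then show "eventually (\<lambda>n. real n \<le> real_of_int (cf_Dsh x (n + 2))) at_top"
    by (intro always_eventually allI)
qed

text \<open>For \<open>x = t / t'\<close>, \<open>euclid_rem x t\<close> is the remainder sequence
  \<open>t, t', t - q\<^sub>0 t', \<dots>\<close> of the Euclidean algorithm applied to \<open>t\<close> and \<open>t'\<close>.\<close>
fun euclid_rem :: "real \<Rightarrow> real \<Rightarrow> nat \<Rightarrow> real" where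
  "euclid_rem x t 0 = t"
| "euclid_rem x t (Suc k) = euclid_rem x t k / cf_rem x k"

lemma euclid_rem_rec:
  assumes "x \<notin> \<rat>"
  shows "euclid_rem x t (Suc (Suc k)) = euclid_rem x t k - of_int (cf_q x k) * euclid_rem x t (Suc k)"
proof -
  have "cf_rem x k \<noteq> 0"
    using cf_rem_irrational[OF assms, of k] by auto
  then show ?thesis
    by (simp add: frac_def cf_q_def field_simps)
qed

lemma euclid_rem_bounds:
  assumes "x > 1" and "x \<notin> \<rat>" and "t > 0"
  shows "0 < euclid_rem x t k" and "euclid_rem x t k \<le> t"
proof -
  have gt_1: "1 < cf_rem x k" for k
    using assms(1) cf_rem_Suc_gt_1[OF assms(2)] by (cases k) auto
  have "0 < euclid_rem x t k \<and> euclid_rem x t k \<le> t"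
  proof (induction k)
    case 0
    then show ?case using assms(3) by simp
  next
    case (Suc k)
    have "euclid_rem x t k / cf_rem x k \<le> euclid_rem x t k / 1"
      using Suc.IH gt_1[of k] by (intro divide_left_mono) auto
    then show ?case
      using Suc.IH gt_1[of k] by auto
  qed
  then show "0 < euclid_rem x t k" and "euclid_rem x t k \<le> t"
    by auto
qed

lemma euclid_rem_cross_sum:
  fixes f :: "nat \<Rightarrow> real"
  assumes "x \<notin> \<rat>" and rec: "\<And>k. f (Suc (Suc k)) = of_int (cf_q x k) * f (Suc k) + f k"
  shows "f (Suc k) * euclid_rem x t k + f k * euclid_rem x t (Suc k) = f 1 * t + f 0 * (t / x)"
proof (induction k)
  case 0
  then show ?case by simp
next
  case (Suc k)
  then show ?case
    by (simp only: rec euclid_rem_rec[OF assms(1)]) (simp add: algebra_simps)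
qed

lemma abs_le_if_cross_sum_0:
  fixes f :: "nat \<Rightarrow> real"
  assumes "x > 1" and "x \<notin> \<rat>" and "t > 0"
    and rec: "\<And>k. f (Suc (Suc k)) = of_int (cf_q x k) * f (Suc k) + f k"
    and "f 1 * t + f 0 * (t / x) = 0"
  shows "\<bar>f k\<bar> \<le> \<bar>f 0\<bar>"
proof -
  note pos = euclid_rem_bounds(1)[OF assms(1-3)]
  have scaled: "\<bar>f k\<bar> * t = \<bar>f 0\<bar> * euclid_rem x t k" for k
  proof (induction k)
    case 0
    then show ?case by simp
  next
    case (Suc k)
    have "f (Suc k) * euclid_rem x t k = - (f k * euclid_rem x t (Suc k))"
      using euclid_rem_cross_sum[of x f k t, OF assms(2) rec] assms(5) by simp
    then have "\<bar>f (Suc k)\<bar> * euclid_rem x t k = \<bar>f k\<bar> * euclid_rem x t (Suc k)"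
      using pos[of k] pos[of "Suc k"] by (metis abs_minus_cancel abs_mult abs_of_pos)
    then have "(\<bar>f (Suc k)\<bar> * t) * euclid_rem x t k = (\<bar>f k\<bar> * t) * euclid_rem x t (Suc k)"
      by (simp only: ac_simps)
    also have "\<dots> = (\<bar>f 0\<bar> * euclid_rem x t k) * euclid_rem x t (Suc k)"
      by (simp only: Suc.IH)
    also have "\<dots> = (\<bar>f 0\<bar> * euclid_rem x t (Suc k)) * euclid_rem x t k"
      by (simp only: ac_simps)
    finally have "(\<bar>f (Suc k)\<bar> * t) * euclid_rem x t k
                    = (\<bar>f 0\<bar> * euclid_rem x t (Suc k)) * euclid_rem x t k" .
    moreover have "euclid_rem x t k \<noteq> 0"
      using pos[of k] by simp
    ultimately show ?case
      by (rule mult_right_cancel[THEN iffD1, rotated])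
  qed
  have "\<bar>f k\<bar> * t \<le> \<bar>f 0\<bar> * t"
    unfolding scaled by (rule mult_left_mono) (simp_all add: euclid_rem_bounds(2)[OF assms(1-3)])
  then show ?thesis
    using assms(3) by simp
qed

lemma coef_sh_minus_cf_Dsh_bounded:
  assumes "x > 1" and "x \<notin> \<rat>" and "t > 0"
    and "of_int a0 * t + of_int a1 * (t / x) = K * (t / x)"
  shows "\<bar>of_int (coef_sh x a0 a1 k) - K * of_int (cf_Dsh x k)\<bar> \<le> \<bar>of_int a1 - K\<bar>"
proof -
  define e where "e k = of_int (coef_sh x a0 a1 k) - K * of_int (cf_Dsh x k)" for k
  have "\<bar>e k\<bar> \<le> \<bar>e 0\<bar>"
  proof (rule abs_le_if_cross_sum_0[OF assms(1-3)])
    show "e (Suc (Suc k)) = of_int (cf_q x k) * e (Suc k) + e k" for k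
      by (simp add: e_def algebra_simps)
    show "e 1 * t + e 0 * (t / x) = 0"
      using assms(4) by (simp add: e_def algebra_simps)
  qed
  then show ?thesis
    by (simp add: e_def)
qed

lemma arctan_ratio_irrational:
  fixes a0 a1 :: int and u0 u1 :: rat
  assumes "u0 > u1" and "u1 > 0"
    and sum: "of_int a0 * arctan (of_rat u0) + of_int a1 * arctan (of_rat u1) = pi / 4"
  shows "arctan (of_rat u0) / arctan (of_rat u1) \<notin> \<rat>"
proof
  define t0 t1 where "t0 = arctan (of_rat u0)" and "t1 = arctan (of_rat u1)"
  have "t1 > 0"
    using assms(2) by (simp add: t1_def)
  assume "arctan (of_rat u0) / arctan (of_rat u1) \<in> \<rat>"
  then obtain s where "t0 / t1 = of_rat s"
    unfolding t0_def t1_def by (blast elim: Rats_cases)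
  then have t0: "t0 = of_rat s * t1"
    using \<open>t1 > 0\<close> by (simp add: field_simps)
  define k where "k = of_int a0 * s + of_int a1"
  have k: "of_rat k * t1 = pi / 4"
    using sum t0 by (simp add: k_def t0_def t1_def of_rat_add of_rat_mult algebra_simps)
  then have "k \<noteq> 0"
    by auto
  have "t1 / pi = of_rat (1 / (4 * k))" "t0 / pi = of_rat (s / (4 * k))"
    using k \<open>k \<noteq> 0\<close> t0 by (simp_all add: of_rat_divide of_rat_mult field_simps)
  then have "u1 = 1" and "u0 = 1"
    using arctan_rat_rational_multiple_pi assms(1,2) by (simp_all add: t0_def t1_def)
  with \<open>u0 > u1\<close> show False
    by simp
qed

lemma asymp_equiv_if_bounded_diff:
  fixes f g :: "'a \<Rightarrow> real"
  assumes "filterlim g at_top F" and "\<And>x. \<bar>f x - g x\<bar> \<le> B"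
  shows "f \<sim>[F] g"
proof (rule smallo_imp_asymp_equiv, rule landau_o.smallI)
  fix c :: real
  assume "c > 0"
  from assms(1) have "eventually (\<lambda>x. B / c \<le> g x) F"
    by (simp add: filterlim_at_top)
  then show "eventually (\<lambda>x. norm (f x - g x) \<le> c * norm (g x)) F"
  proof eventually_elim
    case (elim x)
    then have "B \<le> c * g x"
      using \<open>c > 0\<close> by (simp add: field_simps)
    also have "\<dots> \<le> c * \<bar>g x\<bar>"
      using \<open>c > 0\<close> by (intro mult_left_mono) auto
    finally show ?case
      using assms(2)[of x] by simp
  qed
qed

lemma eventually_pos_if_bounded_diff:
  fixes f g :: "'a \<Rightarrow> real"
  assumes "filterlim g at_top F" and "\<And>x. \<bar>f x - g x\<bar> \<le> B"
  shows "eventually (\<lambda>x. f x > 0) F"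
proof -
  from assms(1) have "eventually (\<lambda>x. B + 1 \<le> g x) F"
    by (simp add: filterlim_at_top)
  then show ?thesis
    by eventually_elim (use assms(2) in \<open>smt (verit) abs_le_iff\<close>)
qed

theorem corollary1:
  fixes a0 a1 :: int and u0 u1 :: rat
  assumes "u0 > u1" and "u1 > 0"
    and "of_int a0 * arctan (of_rat u0) + of_int a1 * arctan (of_rat u1) = pi / 4"
  defines "\<alpha> \<equiv> arctan (of_rat u0) / arctan (of_rat u1)"
  shows "(\<lambda>n. real_of_int (coef_sh \<alpha> a0 a1 (n + 2)))
           \<sim>[at_top] (\<lambda>n. (pi / 4) / arctan (of_rat u1) * real_of_int (cf_Dsh \<alpha> (n + 2)))
       \<and> (\<forall>\<^sub>F n in at_top. coef_sh \<alpha> a0 a1 (n + 2) > 0)"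
proof -
  define t0 t1 where "t0 = arctan (of_rat u0)" and "t1 = arctan (of_rat u1)"
  define K where "K = (pi / 4) / t1"
  have "0 < t1" "t1 < t0"
    using assms(1,2) by (simp_all add: t0_def t1_def arctan_less_iff of_rat_less)
  then have "0 < t0" "\<alpha> > 1" "K > 0" "t0 / \<alpha> = t1"
    by (simp_all add: \<alpha>_def K_def flip: t0_def t1_def)
  have "\<alpha> \<notin> \<rat>"
    using arctan_ratio_irrational[OF assms(1-3)] by (simp add: \<alpha>_def)
  have "of_int a0 * t0 + of_int a1 * (t0 / \<alpha>) = K * (t0 / \<alpha>)"
    unfolding \<open>t0 / \<alpha> = t1\<close> using assms(3) \<open>0 < t1\<close>
    by (simp add: K_def t0_def t1_def)
  then have diff: "\<bar>of_int (coef_sh \<alpha> a0 a1 (n + 2)) - K * of_int (cf_Dsh \<alpha> (n + 2))\<bar>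
                      \<le> \<bar>of_int a1 - K\<bar>" for n
    by (rule coef_sh_minus_cf_Dsh_bounded[OF \<open>\<alpha> > 1\<close> \<open>\<alpha> \<notin> \<rat>\<close> \<open>0 < t0\<close>])
  have lim: "filterlim (\<lambda>n. K * real_of_int (cf_Dsh \<alpha> (n + 2))) at_top at_top"
    using filterlim_cf_Dsh_at_top[OF \<open>\<alpha> \<notin> \<rat>\<close>] \<open>K > 0\<close>
    by (intro filterlim_tendsto_pos_mult_at_top) auto
  have "eventually (\<lambda>n. coef_sh \<alpha> a0 a1 (n + 2) > 0) at_top"
    using eventually_pos_if_bounded_diff[OF lim diff]
    by (rule eventually_mono) (simp only: of_int_0_less_iff)
  with asymp_equiv_if_bounded_diff[OF lim diff] show ?thesis
    unfolding K_def t1_def by blast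
qed

end
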